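(* For every $s\in\mathbb{C}$ with $s\neq0$, $$\eta(s+1)=\frac{2(s-1)}{s}\,\eta(s)+\frac{2^{s-1}\pi}{s}\int_0^\infty \frac{\cos(s\arctan t)\,(1+t^2)^{-s/2}\,\sinh(\pi t/2)}{\cosh^2(\pi t/2)}\,t\,dt .$$
   Context: $\eta(s)=(1-2^{1-s})\zeta(s)$ is Dirichlet's eta function, equal to $\sum_{k\ge1}(-1)^{k+1}k^{-s}$ for $\operatorname{Re}s>0$ and entire. *)

theory Defs
  imports "HOL-Complex_Analysis.Complex_Analysis"
begin

text \<open>Dirichlet's eta function: the unique entire function which, for Re s > 0,
  is the sum of the alternating Dirichlet series sum_{k>=1} (-1)^(k+1) k^(-s).
  (Uniqueness holds by the identity theorem; it equals (1 - 2^(1-s)) zeta(s).)\<close>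

definition dirichlet_eta :: "complex \<Rightarrow> complex" where
  "dirichlet_eta = (THE f. f holomorphic_on UNIV \<and>
      (\<forall>s. 0 < Re s \<longrightarrow>
         (\<lambda>k. (-1) ^ k / (of_nat (Suc k)) powr s) sums f s))"

end

theory Submission
  imports Defs "HOL-Real_Asymp.Real_Asymp"
begin

text \<open>
  For \<open>a \<ge> 1\<close> let \<Phi>(s, a) be the integral over the real line of (a + it)^(-s) / cosh(\<pi>t/2),
  an entire function of s. Integrating (a + iz)^(-s) / cosh(\<pi>z/2) around the rectangle with
  corners \<plusminus>n and \<plusminus>n - 2i, which encloses only the simple pole z = -i, and letting n \<rightarrow> \<infinity> gives
  \<Phi>(s, a) + \<Phi>(s, a + 2) = 4 (a + 1)^(-s). Telescoping, together with \<Phi>(s, a) \<rightarrow> 0 as a \<rightarrow> \<infinity>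
  when Re s > 0, yields \<eta>(s) = 2^(s-2) \<Phi>(s, 1) for Re s > 0, hence for all s by analytic
  continuation. The derivative of t (1 + it)^(-s) / cosh(\<pi>t/2) integrates to zero over the
  real line and is a combination of the integrands of \<Phi>(s, 1), \<Phi>(s + 1, 1) and of
  t (1 + it)^(-s) sinh(\<pi>t/2) / cosh(\<pi>t/2)^2. Finally, symmetrising in t turns (1 + it)^(-s)
  into cos(s arctan t) (1 + t^2)^(-s/2).
\<close>

section \<open>Integrals over the real line\<close>

lemma integrable_exp_neg_abs_nonneg: "(\<lambda>t::real. exp (- \<bar>t\<bar>)) integrable_on {0..}"
proof -
  have "(\<lambda>t::real. exp (- 1 * t)) integrable_on {0..}"
    by (rule integrable_on_exp_minus_to_infinity) auto
  then show ?thesis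
    by (rule integrable_eq) auto
qed

lemma integrable_exp_neg_abs: "(\<lambda>t::real. exp (- \<bar>t\<bar>)) integrable_on UNIV"
proof -
  let ?e = "\<lambda>t::real. exp (- \<bar>t\<bar>)"
  have pos: "?e absolutely_integrable_on {0..}"
    using integrable_exp_neg_abs_nonneg by (intro nonnegative_absolutely_integrable_1) auto
  have "uminus ` {..0::real} \<subseteq> {0..}" "uminus ` {0::real..} \<subseteq> {..0}"
    by auto
  then have "(\<lambda>t. ?e (- t)) absolutely_integrable_on {..0}"
    using has_absolute_integral_reflect_real[of "{..0}" "{0..}" ?e "integral {0..} ?e"] pos
    by simp
  then have "?e absolutely_integrable_on {..0}"
    by simp
  then have "?e absolutely_integrable_on ({0..} \<union> {..0})"
    by (rule absolutely_integrable_Un[OF pos])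
  moreover have "{0..} \<union> {..0} = (UNIV :: real set)"
    by auto
  ultimately show ?thesis
    using absolutely_integrable_on_def by auto
qed

lemma integrable_continuous_dominated:
  fixes f :: "real \<Rightarrow> 'a::euclidean_space"
  assumes "continuous_on S f" "S \<in> sets lebesgue" "g integrable_on S" "\<And>t. t \<in> S \<Longrightarrow> norm (f t) \<le> g t"
  shows "f integrable_on S"
  by (rule measurable_bounded_by_integrable_imp_integrable[OF _ assms(3,4,2)])
     (rule continuous_imp_measurable_on_sets_lebesgue[OF assms(1,2)])

lemma integrable_exp_decay:
  fixes f :: "real \<Rightarrow> 'a::euclidean_space"
  assumes "continuous_on UNIV f" "\<And>t. norm (f t) \<le> M * exp (- \<bar>t\<bar>)"
  shows "f integrable_on UNIV"
  by (rule integrable_continuous_dominated[OF assms(1) _ _ assms(2)])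
     (use integrable_cmul[OF integrable_exp_neg_abs, of M] in simp_all)

lemma integral_restrict_symmetric_intervals_tendsto:
  fixes f :: "real \<Rightarrow> 'a::banach"
  assumes "f integrable_on S"
  shows "(\<lambda>n. integral {- real n..real n} (\<lambda>t. if t \<in> S then f t else 0)) \<longlonglongrightarrow> integral S f"
proof (rule LIMSEQ_I)
  fix \<epsilon> :: real
  assume "\<epsilon> > 0"
  moreover have "(f has_integral integral S f) S"
    using assms by (rule integrable_integral)
  ultimately obtain B where B: "\<And>a b. ball 0 B \<subseteq> cbox a b \<Longrightarrow>
      norm (integral (cbox a b) (\<lambda>t. if t \<in> S then f t else 0) - integral S f) < \<epsilon>"
    unfolding has_integral_alt' by blast
  have "ball 0 B \<subseteq> cbox (- real n) (real n)" if "nat \<lceil>B\<rceil> \<le> n" for n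
    using that by (auto simp: dist_real_def)
  then show "\<exists>N. \<forall>n\<ge>N. norm (integral {- real n..real n} (\<lambda>t. if t \<in> S then f t else 0) - integral S f) < \<epsilon>"
    using B by (metis cbox_interval)
qed

lemma integral_symmetric_intervals_tendsto:
  fixes f :: "real \<Rightarrow> 'a::banach"
  assumes "f integrable_on UNIV"
  shows "(\<lambda>n. integral {- real n..real n} f) \<longlonglongrightarrow> integral UNIV f"
  using integral_restrict_symmetric_intervals_tendsto[OF assms] by simp

lemma integral_halfline_intervals_tendsto:
  fixes f :: "real \<Rightarrow> 'a::banach"
  assumes "f integrable_on {0..}"
  shows "(\<lambda>n. integral {0..real n} f) \<longlonglongrightarrow> integral {0..} f"
proof -
  have "{0..} \<inter> {- real n..real n} = {0..real n}" for n
    by auto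
  then have "integral {- real n..real n} (\<lambda>t. if t \<in> {0..} then f t else 0) = integral {0..real n} f" for n
    by (simp only: integral_restrict_Int)
  then show ?thesis
    using integral_restrict_symmetric_intervals_tendsto[OF assms] by simp
qed

lemma integral_even_part_halfline:
  fixes f :: "real \<Rightarrow> 'a::banach"
  assumes "f integrable_on UNIV" "(\<lambda>t. f t + f (- t)) integrable_on {0..}"
  shows "integral {0..} (\<lambda>t. f t + f (- t)) = integral UNIV f"
proof -
  have int: "f integrable_on {a..b}" "(\<lambda>t. f (- t)) integrable_on {a..b}" for a b
    using integrable_on_subinterval[OF assms(1), of "- b" "- a"] integrable_on_subinterval[OF assms(1), of a b]
      Henstock_Kurzweil_Integration.integrable_reflect_real[of f "- a" "- b"]
    by auto
  have "integral {0..real n} (\<lambda>t. f t + f (- t)) = integral {- real n..real n} f" for n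
  proof -
    have "integral {0..real n} (\<lambda>t. f t + f (- t)) = integral {0..real n} f + integral {- real n..0} f"
      using Henstock_Kurzweil_Integration.integral_reflect_real[of 0 "- real n" f]
      by (simp add: integral_add[OF int])
    also have "\<dots> = integral {- real n..real n} f"
      using Henstock_Kurzweil_Integration.integral_combine[of "- real n" 0 "real n" f] int
      by (simp add: add.commute)
    finally show ?thesis .
  qed
  then have "(\<lambda>n. integral {- real n..real n} f) \<longlonglongrightarrow> integral {0..} (\<lambda>t. f t + f (- t))"
    using integral_halfline_intervals_tendsto[OF assms(2)] by simp
  then show ?thesis
    using integral_symmetric_intervals_tendsto[OF assms(1)] LIMSEQ_unique by blast
qed

lemma norm_integral_tail_le:
  fixes f :: "real \<Rightarrow> 'a::euclidean_space"
  assumes "f integrable_on UNIV" "f integrable_on {a..b}" "g integrable_on UNIV" "g integrable_on {a..b}"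
    and "\<And>t. norm (f t) \<le> g t"
  shows "norm (integral UNIV f - integral {a..b} f) \<le> integral UNIV g - integral {a..b} g"
proof -
  let ?inside = "\<lambda>h t. if t \<in> {a..b} then h t else 0"
  have inside: "?inside f integrable_on UNIV" "?inside g integrable_on UNIV"
    using assms(2,4) by (simp_all only: integrable_restrict_UNIV)
  have "norm (integral UNIV (\<lambda>t. f t - ?inside f t)) \<le> integral UNIV (\<lambda>t. g t - ?inside g t)"
  proof (intro integral_norm_bound_integral integrable_diff inside assms(1,3))
    show "norm (f t - ?inside f t) \<le> g t - ?inside g t" for t
      using assms(5)[of t] order_trans[OF norm_ge_zero assms(5)[of t]] by (cases "t \<in> {a..b}") auto
  qed
  also have "integral UNIV (\<lambda>t. g t - ?inside g t) = integral UNIV g - integral {a..b} g"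
    by (simp only: integral_diff[OF assms(3) inside(2)] integral_restrict_UNIV)
  finally show ?thesis
    by (simp only: integral_diff[OF assms(1) inside(1)] integral_restrict_UNIV)
qed

lemma integral_derivative_eq_0:
  fixes F f :: "real \<Rightarrow> 'a::banach"
  assumes "\<And>t. (F has_vector_derivative f t) (at t)" "f integrable_on UNIV"
    and "(F \<longlongrightarrow> 0) at_top" "(F \<longlongrightarrow> 0) at_bot"
  shows "integral UNIV f = 0"
proof -
  have "integral {- real n..real n} f = F (real n) - F (- real n)" for n
    using assms(1)
    by (intro integral_unique fundamental_theorem_of_calculus) (auto intro: has_vector_derivative_at_within)
  moreover have "(\<lambda>n. F (real n) - F (- real n)) \<longlonglongrightarrow> 0 - 0"
    by (intro tendsto_diff filterlim_compose[OF assms(3) filterlim_real_sequentially]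
        filterlim_compose[OF assms(4) filterlim_compose[OF filterlim_uminus_at_bot_at_top
        filterlim_real_sequentially]])
  ultimately have "(\<lambda>n. integral {- real n..real n} f) \<longlonglongrightarrow> 0"
    by simp
  then show ?thesis
    using integral_symmetric_intervals_tendsto[OF assms(2)] LIMSEQ_unique by blast
qed

section \<open>The function \<open>\<Phi>\<close>\<close>

definition sech_pi_half :: "real \<Rightarrow> real" where
  "sech_pi_half t = 1 / cosh (pi * t / 2)"

definition line_powr :: "complex \<Rightarrow> real \<Rightarrow> real \<Rightarrow> complex" where
  "line_powr s a t = (of_real a + \<i> * of_real t) powr (- s)"

definition Phi_integrand :: "complex \<Rightarrow> real \<Rightarrow> real \<Rightarrow> complex" where
  "Phi_integrand s a t = line_powr s a t * of_real (sech_pi_half t)"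

definition Phi :: "complex \<Rightarrow> real \<Rightarrow> complex" where
  "Phi s a = integral UNIV (Phi_integrand s a)"

lemma sech_pi_half_pos: "sech_pi_half t > 0"
  by (simp add: sech_pi_half_def)

lemma sech_pi_half_le_exp: "sech_pi_half t \<le> 2 * exp (- pi * \<bar>t\<bar> / 2)"
proof -
  have "exp (pi * \<bar>t\<bar> / 2) / 2 \<le> cosh (pi * \<bar>t\<bar> / 2)"
    unfolding cosh_def by (simp add: field_simps)
  also have "cosh (pi * \<bar>t\<bar> / 2) = cosh (pi * t / 2)"
    by (cases "t \<ge> 0") (auto simp: cosh_minus)
  finally have "sech_pi_half t \<le> 1 / (exp (pi * \<bar>t\<bar> / 2) / 2)"
    unfolding sech_pi_half_def by (intro divide_left_mono) auto
  then show ?thesis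
    by (simp add: exp_minus field_simps)
qed

lemma norm_powr_uminus_le:
  fixes w s :: complex
  shows "norm (w powr (- s)) \<le> norm w powr (- Re s) * exp (pi * \<bar>Im s\<bar>)"
proof -
  have "Im s * Arg w \<le> pi * \<bar>Im s\<bar>"
    using mpi_less_Arg[of w] Arg_le_pi[of w] abs_le_iff[of "Arg w" pi]
      abs_mult[of "Im s" "Arg w"] mult_left_mono[of "\<bar>Arg w\<bar>" pi "\<bar>Im s\<bar>"]
    by (smt (verit) abs_ge_self mult.commute)
  then show ?thesis
    by (simp add: norm_powr_complex mult_left_mono)
qed

lemma norm_line_powr_le:
  assumes "a \<ge> 1" "\<bar>Re s\<bar> \<le> R" "\<bar>Im s\<bar> \<le> R"
  shows "norm (line_powr s a t) \<le> (a + \<bar>t\<bar>) powr R * exp (pi * R)"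
proof -
  define z :: complex where "z = of_real a + \<i> * of_real t"
  have "1 \<le> norm z"
    using assms(1) abs_Re_le_cmod[of z] by (simp add: z_def)
  moreover have "norm z \<le> a + \<bar>t\<bar>"
    using norm_triangle_ineq[of "of_real a" "\<i> * of_real t"] assms(1) by (simp add: z_def norm_mult)
  ultimately have "norm z powr (- Re s) \<le> (a + \<bar>t\<bar>) powr R"
    using assms(2) order_trans[OF powr_mono powr_mono2] by fastforce
  moreover have "exp (pi * \<bar>Im s\<bar>) \<le> exp (pi * R)"
    using assms(3) by simp
  ultimately show ?thesis
    using norm_powr_uminus_le[of z s] unfolding line_powr_def z_def[symmetric]
    by (smt (verit) exp_gt_zero mult_mono powr_ge_zero)
qed

text \<open>The first factors come from \<open>ln x \<le> x - 1\<close> at \<open>x = u / (4r + 4)\<close>, which gives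
  \<open>u powr r \<le> exp (r (ln (4r + 4) - 1)) exp (u / 4)\<close>; the rest absorbs \<open>sech_pi_half_le_exp\<close>.\<close>

definition decay_const :: "real \<Rightarrow> real \<Rightarrow> real" where
  "decay_const r a = 2 * exp (r * (ln (4 * r + 4) - 1)) * exp (a / 4)"

lemma powr_le_exp_quarter:
  fixes r u :: real
  assumes "r \<ge> 0" "u > 0"
  shows "u powr r \<le> exp (r * (ln (4 * r + 4) - 1)) * exp (u / 4)"
proof -
  define c where "c = 4 * r + 4"
  have c: "c > 0"
    using assms(1) by (simp add: c_def)
  have "ln u = ln c + ln (u / c)"
    using c assms(2) by (simp add: ln_div)
  also have "ln (u / c) \<le> u / c - 1"
    using c assms(2) by (intro ln_le_minus_one) auto
  finally have "r * ln u \<le> r * (ln c - 1) + r * u / c"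
    using assms(1) mult_left_mono by (fastforce simp: algebra_simps)
  also have "r * u / c \<le> u / 4"
    using assms c by (simp add: c_def field_simps)
  finally show ?thesis
    using assms(2) by (simp add: powr_def exp_add[symmetric] c_def mult.commute)
qed

lemma powr_mult_sech_pi_half_le:
  assumes "r \<ge> 0" "a \<ge> 1"
  shows "(a + \<bar>t\<bar>) powr r * sech_pi_half t \<le> decay_const r a * exp (- \<bar>t\<bar>)"
proof -
  have "(a + \<bar>t\<bar>) powr r * sech_pi_half t
      \<le> (exp (r * (ln (4 * r + 4) - 1)) * exp ((a + \<bar>t\<bar>) / 4)) * (2 * exp (- pi * \<bar>t\<bar> / 2))"
    using assms sech_pi_half_pos[of t]
    by (intro mult_mono powr_le_exp_quarter sech_pi_half_le_exp) auto
  also have "\<dots> = decay_const r a * exp (\<bar>t\<bar> / 4 - pi * \<bar>t\<bar> / 2)"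
    by (simp add: decay_const_def exp_add[symmetric] exp_diff field_simps)
  also have "\<dots> \<le> decay_const r a * exp (- \<bar>t\<bar>)"
    using pi_gt3 mult_right_mono[of 3 pi "\<bar>t\<bar>"] by (simp add: decay_const_def)
  finally show ?thesis .
qed

lemma norm_line_powr_sech_le:
  assumes "a \<ge> 1" "\<bar>Re s\<bar> \<le> R" "\<bar>Im s\<bar> \<le> R" "k \<ge> 0"
  shows "norm (line_powr s a t) * (a + \<bar>t\<bar>) powr k * sech_pi_half t
           \<le> exp (pi * R) * decay_const (R + k) a * exp (- \<bar>t\<bar>)"
proof -
  have "R \<ge> 0"
    using assms(2) by linarith
  have "norm (line_powr s a t) * (a + \<bar>t\<bar>) powr k * sech_pi_half t
      \<le> (a + \<bar>t\<bar>) powr R * exp (pi * R) * (a + \<bar>t\<bar>) powr k * sech_pi_half t"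
    using norm_line_powr_le[OF assms(1-3)] sech_pi_half_pos[of t] by (intro mult_right_mono) auto
  also have "\<dots> = exp (pi * R) * ((a + \<bar>t\<bar>) powr (R + k) * sech_pi_half t)"
    by (simp add: powr_add)
  also have "\<dots> \<le> exp (pi * R) * (decay_const (R + k) a * exp (- \<bar>t\<bar>))"
    using \<open>R \<ge> 0\<close> assms by (intro mult_left_mono powr_mult_sech_pi_half_le) auto
  finally show ?thesis
    by simp
qed

lemma norm_Phi_integrand_le:
  assumes "a \<ge> 1" "\<bar>Re s\<bar> \<le> R" "\<bar>Im s\<bar> \<le> R"
  shows "norm (Phi_integrand s a t) \<le> exp (pi * R) * decay_const R a * exp (- \<bar>t\<bar>)"
  using norm_line_powr_sech_le[OF assms, of 0 t] assms(1) sech_pi_half_pos[of t]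
  by (auto simp: Phi_integrand_def norm_mult split: if_splits)

lemma continuous_on_line_powr: "a > 0 \<Longrightarrow> continuous_on UNIV (line_powr s a)"
  unfolding line_powr_def
  by (intro continuous_intros) (auto simp: complex_nonpos_Reals_iff complex_eq_iff)

lemma continuous_on_sech_pi_half: "continuous_on UNIV sech_pi_half"
  unfolding sech_pi_half_def by (intro continuous_intros) auto

lemma continuous_on_Phi_integrand: "a > 0 \<Longrightarrow> continuous_on UNIV (Phi_integrand s a)"
  unfolding Phi_integrand_def
  by (intro continuous_intros continuous_on_line_powr continuous_on_sech_pi_half)

lemma integrable_Phi_integrand: "a \<ge> 1 \<Longrightarrow> Phi_integrand s a integrable_on UNIV"
  by (rule integrable_exp_decay[OF continuous_on_Phi_integrand
        norm_Phi_integrand_le[of a s "\<bar>Re s\<bar> + \<bar>Im s\<bar>"]]) auto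

lemma integral_Phi_integrand_tendsto:
  "a \<ge> 1 \<Longrightarrow> (\<lambda>n. integral {- real n..real n} (Phi_integrand s a)) \<longlonglongrightarrow> Phi s a"
  unfolding Phi_def by (intro integral_symmetric_intervals_tendsto integrable_Phi_integrand)

lemma holomorphic_integral_Phi_integrand:
  assumes "a > 0"
  shows "(\<lambda>s. integral {b..c} (Phi_integrand s a)) holomorphic_on UNIV"
proof -
  let ?L = "\<lambda>t. Ln (of_real a + \<i> * of_real t)"
  have "(\<lambda>s. integral (cbox b c) (Phi_integrand s a)) holomorphic_on UNIV"
  proof (rule leibniz_rule_holomorphic[where fx = "\<lambda>s t. - ?L t * Phi_integrand s a t"])
    show "((\<lambda>s. Phi_integrand s a t) has_field_derivative - ?L t * Phi_integrand s a t) (at s within UNIV)"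
      for s t
      using assms unfolding Phi_integrand_def line_powr_def powr_def
      by (auto intro!: derivative_eq_intros simp: algebra_simps complex_eq_iff)
    show "Phi_integrand s a integrable_on cbox b c" for s
      using assms by (intro integrable_continuous continuous_on_subset[OF continuous_on_Phi_integrand]) auto
    show "continuous_on (UNIV \<times> cbox b c) (\<lambda>(s, t). - ?L t * Phi_integrand s a t)"
      using assms unfolding Phi_integrand_def line_powr_def sech_pi_half_def case_prod_unfold
      by (intro continuous_intros) (auto simp: complex_nonpos_Reals_iff complex_eq_iff)
  qed auto
  then show ?thesis
    by simp
qed

lemma holomorphic_Phi:
  assumes "a \<ge> 1"
  shows "(\<lambda>s. Phi s a) holomorphic_on UNIV"
proof (rule holomorphic_uniform_sequence[where f = "\<lambda>n s. integral {- real n..real n} (Phi_integrand s a)"])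
  show "(\<lambda>s. integral {- real n..real n} (Phi_integrand s a)) holomorphic_on UNIV" for n
    using assms by (intro holomorphic_integral_Phi_integrand) auto
  fix z :: complex
  define R where "R = norm z + 1"
  define M where "M = exp (pi * R) * decay_const R a"
  let ?e = "\<lambda>t::real. exp (- \<bar>t\<bar>)"
  let ?tail = "\<lambda>n::nat. M * (integral UNIV ?e - integral {- real n..real n} ?e)"
  have int_e: "?e integrable_on {b..c}" for b c
    by (intro integrable_continuous_interval continuous_intros)
  have "(\<lambda>n. integral {- real n..real n} ?e) \<longlonglongrightarrow> integral UNIV ?e"
    by (rule integral_symmetric_intervals_tendsto[OF integrable_exp_neg_abs])
  then have "?tail \<longlonglongrightarrow> M * (integral UNIV ?e - integral UNIV ?e)"
    by (intro tendsto_intros)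
  then have tail: "?tail \<longlonglongrightarrow> 0"
    by simp
  have bound: "dist (integral {- real n..real n} (Phi_integrand s a)) (Phi s a) \<le> ?tail n"
    if "s \<in> cball z 1" for s n
  proof -
    have R: "\<bar>Re s\<bar> \<le> R" "\<bar>Im s\<bar> \<le> R"
      using that abs_Re_le_cmod[of s] abs_Im_le_cmod[of s] norm_triangle_ineq2[of s z]
      by (auto simp: R_def dist_norm norm_minus_commute)
    have "dist (integral {- real n..real n} (Phi_integrand s a)) (Phi s a)
        = norm (integral UNIV (Phi_integrand s a) - integral {- real n..real n} (Phi_integrand s a))"
      by (simp add: Phi_def dist_norm norm_minus_commute)
    also have "\<dots> \<le> integral UNIV (\<lambda>t. M * ?e t) - integral {- real n..real n} (\<lambda>t. M * ?e t)"
    proof (rule norm_integral_tail_le)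
      show "Phi_integrand s a integrable_on UNIV"
        using assms by (rule integrable_Phi_integrand)
      show "Phi_integrand s a integrable_on {- real n..real n}"
        using assms
        by (intro integrable_continuous_interval continuous_on_subset[OF continuous_on_Phi_integrand]) auto
      show "(\<lambda>t. M * ?e t) integrable_on UNIV"
        using integrable_cmul[OF integrable_exp_neg_abs, of M] by simp
      show "(\<lambda>t. M * ?e t) integrable_on {- real n..real n}"
        by (intro integrable_continuous_interval continuous_intros)
      show "norm (Phi_integrand s a t) \<le> M * ?e t" for t
        unfolding M_def by (rule norm_Phi_integrand_le[OF assms R])
    qed
    also have "\<dots> = ?tail n"
      by (simp only: integral_mult_right right_diff_distrib)
    finally show ?thesis .
  qed
  have "uniform_limit (cball z 1) (\<lambda>n s. integral {- real n..real n} (Phi_integrand s a))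
      (\<lambda>s. Phi s a) sequentially"
    unfolding uniform_limit_iff
  proof (intro allI impI)
    fix \<epsilon> :: real
    assume "\<epsilon> > 0"
    with tail have "\<forall>\<^sub>F n in sequentially. ?tail n < \<epsilon>"
      by (simp add: order_tendsto_iff)
    then show "\<forall>\<^sub>F n in sequentially. \<forall>s\<in>cball z 1.
        dist (integral {- real n..real n} (Phi_integrand s a)) (Phi s a) < \<epsilon>"
      by eventually_elim (auto intro: le_less_trans[OF bound])
  qed
  then show "\<exists>d>0. cball z d \<subseteq> UNIV \<and> uniform_limit (cball z d)
      (\<lambda>n s. integral {- real n..real n} (Phi_integrand s a)) (\<lambda>s. Phi s a) sequentially"
    by (intro exI[of _ 1]) auto
qed auto

section \<open>The shift relation for \<open>\<Phi>\<close>\<close>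

lemma cosh_complex_of_real: "cosh (complex_of_real x) = of_real (cosh x)"
  using of_real_exp[of x, where 'a = complex] of_real_exp[of "- x", where 'a = complex]
  by (simp add: cosh_field_def)

lemma sinh_complex_of_real: "sinh (complex_of_real x) = of_real (sinh x)"
  using of_real_exp[of x, where 'a = complex] of_real_exp[of "- x", where 'a = complex]
  by (simp add: sinh_field_def)

lemma cosh_diff_i_pi: "cosh (z - \<i> * of_real pi :: complex) = - cosh z"
proof -
  have "exp (z - \<i> * of_real pi) = - exp z" "exp (- (z - \<i> * of_real pi)) = - exp (- z)"
    by (simp_all add: exp_diff exp_minus field_simps)
  then show ?thesis
    unfolding cosh_field_def by (simp add: field_simps)
qed

lemma norm_cosh_ge_abs_sinh_Re: "\<bar>sinh (Re z)\<bar> \<le> norm (cosh (z :: complex))"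
proof -
  have "\<bar>exp (Re z) - exp (- Re z)\<bar> \<le> norm (exp z + exp (- z))"
    using norm_diff_ineq[of "exp z" "exp (- z)"] norm_diff_ineq[of "exp (- z)" "exp z"]
    by (auto simp: add.commute)
  then show ?thesis
    by (simp add: cosh_field_def sinh_field_def norm_divide)
qed

lemma holomorphic_on_cosh [holomorphic_intros]:
  "f holomorphic_on A \<Longrightarrow> (\<lambda>x. cosh (f x :: complex)) holomorphic_on A"
  unfolding cosh_conv_cos by (intro holomorphic_intros)

definition Phi_kernel :: "complex \<Rightarrow> real \<Rightarrow> complex \<Rightarrow> complex" where
  "Phi_kernel s a z = (of_real a + \<i> * z) powr (- s) / cosh (of_real pi * z / 2)"

text \<open>Wide enough to contain the rectangles, narrow enough that \<open>-\<i>\<close> is the only zero of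
  \<open>cosh (\<pi> z / 2)\<close> in it and that \<open>a + \<i> z\<close> avoids the branch cut of \<open>powr\<close> for \<open>a \<ge> 1\<close>.\<close>

definition pole_strip :: "complex set" where
  "pole_strip = {z. - 3 < Im z \<and> Im z < 1}"

lemma open_pole_strip: "open pole_strip"
  unfolding pole_strip_def by (intro open_Collect_conj open_Collect_less continuous_intros)

lemma convex_pole_strip: "convex pole_strip"
proof -
  have "pole_strip = {z. inner \<i> z > - 3} \<inter> {z. inner \<i> z < 1}"
    by (auto simp: pole_strip_def inner_complex_def)
  then show ?thesis
    using convex_Int[OF convex_halfspace_gt convex_halfspace_lt] by metis
qed

lemma cosh_pi_half_eq_0_in_pole_strip:
  assumes "cosh (of_real pi * z / 2) = 0" "z \<in> pole_strip"
  shows "z = - \<i>"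
proof -
  have "cos (\<i> * (of_real pi * z / 2)) = 0"
    using assms(1) by (simp add: cosh_conv_cos)
  then obtain n :: int where n: "\<i> * (of_real pi * z / 2) = of_real (n * pi) + of_real pi / 2"
    by (auto simp: cos_eq_0)
  have "Re z = 0"
    using arg_cong[OF n, of Im] by simp
  moreover have "- pi * Im z / 2 = n * pi + pi / 2"
    using arg_cong[OF n, of Re] by simp
  then have "pi * (Im z + 2 * n + 1) = 0"
    by (simp add: field_simps)
  then have "Im z = - (2 * n + 1)"
    by simp
  moreover from this have "n = 0"
    using assms(2) by (simp add: pole_strip_def)
  ultimately show ?thesis
    by (simp add: complex_eq_iff)
qed

lemma holomorphic_Phi_kernel: "a \<ge> 1 \<Longrightarrow> Phi_kernel s a holomorphic_on pole_strip - {- \<i>}"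
  unfolding Phi_kernel_def
  by (intro holomorphic_intros)
     (auto simp: pole_strip_def complex_nonpos_Reals_iff dest: cosh_pi_half_eq_0_in_pole_strip)

lemma residue_Phi_kernel:
  assumes "a \<ge> 1"
  shows "residue (Phi_kernel s a) (- \<i>) = 2 * \<i> / pi * of_real (a + 1) powr (- s)"
proof (rule residue_simple'[OF open_pole_strip _ holomorphic_Phi_kernel[OF assms]])
  show "- \<i> \<in> pole_strip"
    by (simp add: pole_strip_def)
  define N where "N = (\<lambda>z. (of_real a + \<i> * z) powr (- s))"
  define D :: complex where "D = - \<i> * of_real pi / 2"
  have i_pi: "\<i> * (of_real pi * (- \<i>) / 2) = (of_real (pi / 2) :: complex)"
    by (simp add: field_simps)
  have "((\<lambda>z. cosh (of_real pi * z / 2)) has_field_derivative D) (at (- \<i>))"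
  proof -
    have "sinh (of_real pi * (- \<i>) / 2 :: complex) = - \<i>"
      by (simp only: sinh_conv_sin i_pi sin_of_real) simp
    then show ?thesis
      unfolding D_def by (auto intro!: derivative_eq_intros simp: algebra_simps)
  qed
  moreover have "cosh (of_real pi * (- \<i>) / 2 :: complex) = 0"
    by (simp only: cosh_conv_cos i_pi cos_of_real) simp
  ultimately have "((\<lambda>z. cosh (of_real pi * z / 2) / (z - (- \<i>))) \<longlongrightarrow> D) (at (- \<i>))"
    by (simp add: has_field_derivative_iff)
  then have "((\<lambda>z. inverse (cosh (of_real pi * z / 2) / (z - (- \<i>)))) \<longlongrightarrow> inverse D) (at (- \<i>))"
    by (rule tendsto_inverse) (simp add: D_def)
  moreover have "isCont N (- \<i>)"
    unfolding N_def using assms by (intro continuous_intros) (auto simp: complex_nonpos_Reals_iff)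
  ultimately have "((\<lambda>z. N z * inverse (cosh (of_real pi * z / 2) / (z - (- \<i>)))) \<longlongrightarrow> N (- \<i>) * inverse D)
      (at (- \<i>))"
    by (intro tendsto_mult) (auto simp: isCont_def)
  moreover have "N (- \<i>) * inverse D = 2 * \<i> / pi * of_real (a + 1) powr (- s)"
    by (simp add: N_def D_def field_simps)
  moreover have "(\<lambda>w. Phi_kernel s a w * (w - - \<i>))
      = (\<lambda>z. N z * inverse (cosh (of_real pi * z / 2) / (z - (- \<i>))))"
    by (simp add: Phi_kernel_def N_def fun_eq_iff)
  ultimately show "((\<lambda>w. Phi_kernel s a w * (w - - \<i>)) \<longlongrightarrow> 2 * \<i> / pi * of_real (a + 1) powr (- s))
      (at (- \<i>))"
    by simp
qed

lemma contour_integral_rectpath_Phi_kernel: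
  assumes "a \<ge> 1" "n > 0"
  shows "contour_integral (rectpath (Complex (- n) (- 2)) (Complex n 0)) (Phi_kernel s a) =
           - 4 * of_real (a + 1) powr (- s)"
proof -
  let ?g = "rectpath (Complex (- n) (- 2)) (Complex n 0)"
  have image: "path_image ?g \<subseteq> pole_strip - {- \<i>}"
    using assms(2) by (subst path_image_rectpath) (auto simp: pole_strip_def complex_eq_iff)
  have outside: "\<forall>z. z \<notin> pole_strip \<longrightarrow> winding_number ?g z = 0"
    using assms(2)
    by (auto intro!: winding_number_rectpath_outside simp: pole_strip_def in_cbox_complex_iff)
  have "contour_integral ?g (Phi_kernel s a)
      = 2 * pi * \<i> * (\<Sum>p\<in>{- \<i>}. winding_number ?g p * residue (Phi_kernel s a) p)"
    by (rule Residue_theorem[OF open_pole_strip convex_connected[OF convex_pole_strip] _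
          holomorphic_Phi_kernel[OF assms(1)] _ _ image outside]) auto
  moreover have "winding_number ?g (- \<i>) = 1"
    using assms(2) by (intro winding_number_rectpath) (auto simp: in_box_complex_iff)
  ultimately show ?thesis
    using residue_Phi_kernel[OF assms(1), of s] by simp
qed

lemma Phi_kernel_of_real: "Phi_kernel s a (of_real x) = Phi_integrand s a x"
proof -
  have "cosh (of_real pi * of_real x / 2) = complex_of_real (cosh (pi * x / 2))"
    using cosh_complex_of_real[of "pi * x / 2"] by simp
  then show ?thesis
    unfolding Phi_kernel_def Phi_integrand_def line_powr_def sech_pi_half_def
    by (simp only: of_real_divide of_real_1 times_divide_eq_right mult_1_right)
qed

lemma Phi_kernel_of_real_minus_2i: "Phi_kernel s a (of_real x - 2 * \<i>) = - Phi_integrand s (a + 2) x"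
proof -
  have "of_real pi * (of_real x - 2 * \<i>) / 2 = of_real (pi * x / 2) - \<i> * of_real pi"
    by (simp add: field_simps)
  then have "cosh (of_real pi * (of_real x - 2 * \<i>) / 2) = - of_real (cosh (pi * x / 2))"
    by (simp only: cosh_diff_i_pi cosh_complex_of_real)
  moreover have "of_real a + \<i> * (of_real x - 2 * \<i>) = of_real (a + 2) + \<i> * of_real x"
    by (simp add: field_simps)
  ultimately show ?thesis
    by (simp add: Phi_kernel_def Phi_integrand_def line_powr_def sech_pi_half_def field_simps)
qed

lemma contour_integral_bottom_edge:
  assumes "n > 0"
  shows "contour_integral (linepath (Complex (- n) (- 2)) (Complex n (- 2))) (Phi_kernel s a) =
           - integral {- n..n} (Phi_integrand s (a + 2))"
proof -
  have "linepath (Complex (- n) (- 2)) (Complex n (- 2)) = (+) (- 2 * \<i>) \<circ> linepath (of_real (- n)) (of_real n)"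
    by (simp add: linepath_translate Complex_eq mult.commute)
  then have "contour_integral (linepath (Complex (- n) (- 2)) (Complex n (- 2))) (Phi_kernel s a) =
      contour_integral (linepath (of_real (- n)) (of_real n)) (\<lambda>z. Phi_kernel s a (z - 2 * \<i>))"
    by (simp add: contour_integral_translate)
  also have "\<dots> = integral {- n..n} (\<lambda>x. Phi_kernel s a (of_real x - 2 * \<i>))"
    using assms by (subst contour_integral_linepath_Reals_eq) auto
  also have "\<dots> = - integral {- n..n} (Phi_integrand s (a + 2))"
    by (simp add: Phi_kernel_of_real_minus_2i integral_neg)
  finally show ?thesis .
qed

lemma contour_integral_top_edge:
  assumes "n > 0"
  shows "contour_integral (linepath (Complex n 0) (Complex (- n) 0)) (Phi_kernel s a) =
           - integral {- n..n} (Phi_integrand s a)"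
proof -
  have "Complex n 0 = of_real n" "Complex (- n) 0 = of_real (- n)"
    by (simp_all add: complex_eq_iff)
  then have "contour_integral (linepath (Complex n 0) (Complex (- n) 0)) (Phi_kernel s a) =
      - contour_integral (linepath (of_real (- n)) (of_real n)) (Phi_kernel s a)"
    using contour_integral_reversepath[of "linepath (of_real (- n)) (of_real n)" "Phi_kernel s a"]
    by simp
  also have "\<dots> = - integral {- n..n} (Phi_integrand s a)"
    using assms by (subst contour_integral_linepath_Reals_eq) (auto simp: Phi_kernel_of_real)
  finally show ?thesis .
qed

definition side_bound :: "complex \<Rightarrow> real \<Rightarrow> real \<Rightarrow> real" where
  "side_bound s a n = (a + 2 + n) powr \<bar>Re s\<bar> * exp (pi * \<bar>Im s\<bar>) / sinh (pi * n / 2)"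

lemma norm_Phi_kernel_side_le:
  assumes "a \<ge> 1" "n > 0" "\<bar>Re z\<bar> = n" "- 2 \<le> Im z" "Im z \<le> 0"
  shows "norm (Phi_kernel s a z) \<le> side_bound s a n"
proof -
  define w where "w = of_real a + \<i> * z"
  have w: "1 \<le> norm w" "norm w \<le> a + 2 + n"
    using abs_Re_le_cmod[of w] cmod_le[of w] assms by (auto simp: w_def)
  have "norm w powr (- Re s) \<le> (a + 2 + n) powr \<bar>Re s\<bar>"
    using w order_trans[OF powr_mono powr_mono2] by fastforce
  then have num: "norm (w powr (- s)) \<le> (a + 2 + n) powr \<bar>Re s\<bar> * exp (pi * \<bar>Im s\<bar>)"
    using norm_powr_uminus_le[of w s] by (smt (verit) exp_gt_zero mult_right_mono)
  have "Re z = n \<or> Re z = - n"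
    using assms(3) by linarith
  then have "\<bar>sinh (pi * Re z / 2)\<bar> = sinh (pi * n / 2)"
    using assms(2) by auto
  then have den: "sinh (pi * n / 2) \<le> norm (cosh (of_real pi * z / 2))"
    using norm_cosh_ge_abs_sinh_Re[of "of_real pi * z / 2"] by simp
  have "norm (Phi_kernel s a z) = norm (w powr (- s)) / norm (cosh (of_real pi * z / 2))"
    by (simp add: Phi_kernel_def w_def norm_divide)
  also have "\<dots> \<le> side_bound s a n"
    unfolding side_bound_def using num den assms(2) by (intro frac_le) auto
  finally show ?thesis .
qed

lemma side_bound_tendsto_0: "(\<lambda>n::nat. side_bound s a (real n)) \<longlonglongrightarrow> 0"
  unfolding side_bound_def sinh_field_def by real_asymp

lemma Phi_integrals_rectangle_estimate:
  assumes "a \<ge> 1" "n > 0"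
  shows "norm (integral {- n..n} (Phi_integrand s a) + integral {- n..n} (Phi_integrand s (a + 2))
           - 4 * of_real (a + 1) powr (- s)) \<le> 4 * side_bound s a n"
proof -
  define p1 where "p1 = Complex (- n) (- 2)"
  define p2 where "p2 = Complex n (- 2)"
  define p3 where "p3 = Complex n 0"
  define p4 where "p4 = Complex (- n) 0"
  have "closed_segment p1 p2 \<subseteq> pole_strip - {- \<i>}" "closed_segment p2 p3 \<subseteq> pole_strip - {- \<i>}"
       "closed_segment p3 p4 \<subseteq> pole_strip - {- \<i>}" "closed_segment p4 p1 \<subseteq> pole_strip - {- \<i>}"
    using assms(2)
    by (auto simp: p1_def p2_def p3_def p4_def closed_segment_same_Im closed_segment_same_Re
        closed_segment_eq_real_ivl pole_strip_def complex_eq_iff)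
  moreover have "continuous_on (pole_strip - {- \<i>}) (Phi_kernel s a)"
    using holomorphic_Phi_kernel[OF assms(1)] holomorphic_on_imp_continuous_on by blast
  ultimately have integrable: "Phi_kernel s a contour_integrable_on linepath p1 p2"
      "Phi_kernel s a contour_integrable_on linepath p2 p3"
      "Phi_kernel s a contour_integrable_on linepath p3 p4"
      "Phi_kernel s a contour_integrable_on linepath p4 p1"
    by (meson contour_integrable_continuous_linepath continuous_on_subset)+
  have "rectpath p1 p3 = linepath p1 p2 +++ linepath p2 p3 +++ linepath p3 p4 +++ linepath p4 p1"
    by (simp add: rectpath_def Let_def p1_def p2_def p3_def p4_def)
  then have "contour_integral (rectpath p1 p3) (Phi_kernel s a) =
      contour_integral (linepath p1 p2) (Phi_kernel s a) + contour_integral (linepath p2 p3) (Phi_kernel s a) +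
      contour_integral (linepath p3 p4) (Phi_kernel s a) + contour_integral (linepath p4 p1) (Phi_kernel s a)"
    using integrable by (simp add: contour_integrable_joinI valid_path_join add.assoc)
  then have sides: "integral {- n..n} (Phi_integrand s a) + integral {- n..n} (Phi_integrand s (a + 2))
      - 4 * of_real (a + 1) powr (- s)
      = contour_integral (linepath p2 p3) (Phi_kernel s a) + contour_integral (linepath p4 p1) (Phi_kernel s a)"
    using contour_integral_rectpath_Phi_kernel[OF assms, of s]
      contour_integral_bottom_edge[OF assms(2), of s a] contour_integral_top_edge[OF assms(2), of s a]
    unfolding p1_def p2_def p3_def p4_def by (simp add: algebra_simps)
  have bound_0: "side_bound s a n \<ge> 0"
    using assms by (simp add: side_bound_def)
  have "norm (contour_integral (linepath p2 p3) (Phi_kernel s a)) \<le> side_bound s a n * norm (p3 - p2)"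
    using assms
    by (intro contour_integral_bound_linepath[OF integrable(2) bound_0] norm_Phi_kernel_side_le)
       (auto simp: p2_def p3_def closed_segment_same_Re closed_segment_eq_real_ivl)
  moreover have "norm (contour_integral (linepath p4 p1) (Phi_kernel s a)) \<le> side_bound s a n * norm (p1 - p4)"
    using assms
    by (intro contour_integral_bound_linepath[OF integrable(4) bound_0] norm_Phi_kernel_side_le)
       (auto simp: p4_def p1_def closed_segment_same_Re closed_segment_eq_real_ivl)
  moreover have "norm (p3 - p2) = 2" "norm (p1 - p4) = 2"
    by (simp_all add: p1_def p2_def p3_def p4_def cmod_def)
  ultimately show ?thesis
    unfolding sides
    using norm_triangle_ineq[of "contour_integral (linepath p2 p3) (Phi_kernel s a)"
        "contour_integral (linepath p4 p1) (Phi_kernel s a)"]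
    by simp
qed

lemma Phi_add_Phi_shift:
  assumes "a \<ge> 1"
  shows "Phi s a + Phi s (a + 2) = 4 * of_real (a + 1) powr (- s)"
proof -
  let ?defect = "\<lambda>n::nat. integral {- real n..real n} (Phi_integrand s a)
      + integral {- real n..real n} (Phi_integrand s (a + 2)) - 4 * of_real (a + 1) powr (- s)"
  have "?defect \<longlonglongrightarrow> Phi s a + Phi s (a + 2) - 4 * of_real (a + 1) powr (- s)"
    using assms by (intro tendsto_intros integral_Phi_integrand_tendsto) auto
  moreover have "?defect \<longlonglongrightarrow> 0"
  proof (rule Lim_null_comparison[OF _ tendsto_mult_right_zero[OF side_bound_tendsto_0]])
    show "\<forall>\<^sub>F n in sequentially. norm (?defect n) \<le> 4 * side_bound s a (real n)"
      using assms by (intro eventually_sequentiallyI[of 1] Phi_integrals_rectangle_estimate) auto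
  qed
  ultimately show ?thesis
    using LIMSEQ_unique by fastforce
qed

section \<open>Dirichlet's eta function in terms of \<open>\<Phi>\<close>\<close>

lemma Phi_telescope:
  "Phi s 1 = (\<Sum>k<n. (- 1) ^ k * 4 * of_real (2 * real k + 2) powr (- s))
             + (- 1) ^ n * Phi s (1 + 2 * real n)"
proof (induction n)
  case (Suc n)
  have "Phi s (1 + 2 * real n) + Phi s (1 + 2 * real n + 2) = 4 * of_real (1 + 2 * real n + 1) powr (- s)"
    by (rule Phi_add_Phi_shift) auto
  then have shift: "Phi s (1 + 2 * real n)
      = 4 * of_real (2 * real n + 2) powr (- s) - Phi s (1 + 2 * real (Suc n))"
    by (simp add: algebra_simps)
  show ?case
    unfolding Suc.IH shift by (simp add: algebra_simps)
qed simp

lemma norm_Phi_le: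
  assumes "a \<ge> 1" "Re s > 0"
  shows "norm (Phi s a) \<le> a powr (- Re s) * exp (pi * \<bar>Im s\<bar>) * 2 * integral UNIV (\<lambda>t::real. exp (- \<bar>t\<bar>))"
proof -
  define K where "K = a powr (- Re s) * exp (pi * \<bar>Im s\<bar>) * 2"
  have "norm (Phi_integrand s a t) \<le> K * exp (- \<bar>t\<bar>)" for t
  proof -
    define z :: complex where "z = of_real a + \<i> * of_real t"
    have "a \<le> norm z"
      using abs_Re_le_cmod[of z] assms(1) by (simp add: z_def)
    then have "norm z powr (- Re s) \<le> a powr (- Re s)"
      using assms by (intro powr_mono2') auto
    then have "norm (line_powr s a t) \<le> a powr (- Re s) * exp (pi * \<bar>Im s\<bar>)"
      using norm_powr_uminus_le[of z s] unfolding line_powr_def z_def[symmetric]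
      by (smt (verit) exp_gt_zero mult_right_mono)
    moreover have "sech_pi_half t \<le> 2 * exp (- \<bar>t\<bar>)"
    proof -
      have "exp (- pi * \<bar>t\<bar> / 2) \<le> exp (- \<bar>t\<bar>)"
        using pi_gt3 mult_right_mono[of 2 pi "\<bar>t\<bar>"] by simp
      then show ?thesis
        using sech_pi_half_le_exp[of t] by linarith
    qed
    ultimately have "norm (line_powr s a t) * sech_pi_half t
        \<le> (a powr (- Re s) * exp (pi * \<bar>Im s\<bar>)) * (2 * exp (- \<bar>t\<bar>))"
      using sech_pi_half_pos[of t] by (intro mult_mono) auto
    then show ?thesis
      using sech_pi_half_pos[of t] by (simp add: Phi_integrand_def norm_mult K_def mult.assoc)
  qed
  then have "norm (Phi s a) \<le> integral UNIV (\<lambda>t. K * exp (- \<bar>t\<bar>))"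
    unfolding Phi_def
    using integrable_cmul[OF integrable_exp_neg_abs, of K]
    by (intro integral_norm_bound_integral integrable_Phi_integrand assms(1)) auto
  then show ?thesis
    by (simp add: K_def)
qed

lemma Phi_tendsto_0:
  assumes "Re s > 0"
  shows "((\<lambda>a. Phi s a) \<longlongrightarrow> 0) at_top"
proof (rule Lim_null_comparison)
  let ?C = "exp (pi * \<bar>Im s\<bar>) * 2 * integral UNIV (\<lambda>t::real. exp (- \<bar>t\<bar>))"
  show "\<forall>\<^sub>F a in at_top. norm (Phi s a) \<le> a powr (- Re s) * ?C"
  proof (rule eventually_at_top_linorderI[of 1])
    fix a :: real
    assume "a \<ge> 1"
    then show "norm (Phi s a) \<le> a powr (- Re s) * ?C"
      using norm_Phi_le[of a s] assms by (simp only: mult.assoc)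
  qed
  show "((\<lambda>a. a powr (- Re s) * ?C) \<longlongrightarrow> 0) at_top"
    using assms by (intro tendsto_mult_left_zero tendsto_neg_powr filterlim_ident) auto
qed

lemma eta_series_sums_Phi:
  assumes "Re s > 0"
  shows "(\<lambda>k. (- 1) ^ k / of_nat (Suc k) powr s) sums (2 powr (s - 2) * Phi s 1)"
proof -
  define f where "f = (\<lambda>k::nat. (- 1) ^ k * 4 * of_real (2 * real k + 2) powr (- s) :: complex)"
  have "filterlim (\<lambda>n::nat. 1 + 2 * real n) at_top sequentially"
    by real_asymp
  then have "(\<lambda>n. Phi s (1 + 2 * real n)) \<longlonglongrightarrow> 0"
    by (rule filterlim_compose[OF Phi_tendsto_0[OF assms]])
  then have "(\<lambda>n. norm (Phi s (1 + 2 * real n))) \<longlonglongrightarrow> 0"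
    by (rule tendsto_norm_zero)
  then have "(\<lambda>n. (- 1) ^ n * Phi s (1 + 2 * real n)) \<longlonglongrightarrow> 0"
    by (rule Lim_null_comparison[rotated]) (simp add: norm_mult norm_power)
  then have "(\<lambda>n. Phi s 1 - (- 1) ^ n * Phi s (1 + 2 * real n)) \<longlonglongrightarrow> Phi s 1 - 0"
    by (intro tendsto_diff tendsto_const)
  moreover have "Phi s 1 - (- 1) ^ n * Phi s (1 + 2 * real n) = (\<Sum>k<n. f k)" for n
    using Phi_telescope[of s n] by (simp add: f_def)
  ultimately have "f sums Phi s 1"
    unfolding sums_def by simp
  then have "(\<lambda>k. 2 powr (s - 2) * f k) sums (2 powr (s - 2) * Phi s 1)"
    by (rule sums_mult)
  moreover have "2 powr (s - 2) * f k = (- 1) ^ k / of_nat (Suc k) powr s" for k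
  proof -
    have "of_real (2 * real k + 2) powr (- s) = 2 powr (- s) * of_nat (Suc k) powr (- s :: complex)"
      using powr_times_real[of 2 "real (Suc k)" "- s"] by (simp add: add.commute)
    then have "2 powr (s - 2) * f k
        = 4 * (2 powr (s - 2) * 2 powr (- s)) * ((- 1) ^ k * of_nat (Suc k) powr (- s))"
      by (simp add: f_def mult_ac)
    also have "(2 :: complex) powr (s - 2) * 2 powr (- s) = 2 powr (s - 2 + - s)"
      by (rule powr_add[symmetric])
    also have "(2 :: complex) powr (s - 2 + - s) = 1 / 4"
      by (simp add: powr_minus_divide)
    finally show ?thesis
      by (simp add: powr_minus_divide)
  qed
  ultimately show ?thesis
    by simp
qed

lemma dirichlet_eta_eq_Phi: "dirichlet_eta s = 2 powr (s - 2) * Phi s 1"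
proof -
  let ?E = "\<lambda>s. 2 powr (s - 2) * Phi s 1"
  have holo: "?E holomorphic_on UNIV"
    by (intro holomorphic_intros holomorphic_Phi) auto
  have eta: "dirichlet_eta = ?E"
    unfolding dirichlet_eta_def
  proof (rule the_equality)
    show "?E holomorphic_on UNIV \<and> (\<forall>s. 0 < Re s \<longrightarrow> (\<lambda>k. (- 1) ^ k / of_nat (Suc k) powr s) sums ?E s)"
      using holo eta_series_sums_Phi by auto
    fix f
    assume f: "f holomorphic_on UNIV \<and> (\<forall>s. 0 < Re s \<longrightarrow> (\<lambda>k. (- 1) ^ k / of_nat (Suc k) powr s) sums f s)"
    have "f z = ?E z" for z
    proof (rule analytic_continuation_open[of "{s. Re s > 0}" UNIV f ?E])
      show "{s. Re s > 0} \<noteq> {}"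
        using zero_less_one by (metis Re_complex_of_real mem_Collect_eq empty_iff)
      show "f s = ?E s" if "s \<in> {s. Re s > 0}" for s
        using that f eta_series_sums_Phi[of s] sums_unique2 by auto
    qed (use f holo in \<open>auto simp: open_halfspace_Re_gt\<close>)
    then show "f = ?E"
      by blast
  qed
  show ?thesis
    using fun_cong[OF eta, of s] by simp
qed

section \<open>Symmetrisation and integration by parts\<close>

lemma Ln_1_plus_i_of_real: "Ln (1 + \<i> * of_real t) = of_real (ln (1 + t\<^sup>2) / 2) + \<i> * of_real (arctan t)"
proof -
  define L where "L = of_real (ln (1 + t\<^sup>2) / 2) + \<i> * of_real (arctan t)"
  have pos: "1 + t\<^sup>2 > 0"
    by (simp add: add_pos_nonneg)
  have "exp (ln (1 + t\<^sup>2) / 2) = (1 + t\<^sup>2) powr (1 / 2)"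
    using pos by (simp add: powr_def mult.commute)
  also have "\<dots> = sqrt (1 + t\<^sup>2)"
    using pos by (simp add: powr_half_sqrt)
  finally have modulus: "exp (ln (1 + t\<^sup>2) / 2) = sqrt (1 + t\<^sup>2)" .
  have "exp L = of_real (exp (ln (1 + t\<^sup>2) / 2)) * (of_real (cos (arctan t)) + \<i> * of_real (sin (arctan t)))"
    by (simp add: L_def exp_add Euler mult.commute)
  also have "\<dots> = 1 + \<i> * of_real t"
    using real_sqrt_gt_zero[OF pos] by (simp add: modulus cos_arctan sin_arctan field_simps)
  finally have "exp L = 1 + \<i> * of_real t" .
  moreover have "Ln (exp L) = L"
    using arctan_lbound[of t] arctan_ubound[of t] by (intro Ln_exp) (auto simp: L_def)
  ultimately show ?thesis
    by (simp add: L_def)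
qed

lemma line_powr_1_eq_exp:
  "line_powr s 1 t = exp (- s * of_real (ln (1 + t\<^sup>2) / 2)) * exp (- (\<i> * s * of_real (arctan t)))"
proof -
  have "(1::complex) + \<i> * of_real t \<noteq> 0"
    by (auto simp: complex_eq_iff)
  then have "line_powr s 1 t = exp (- s * Ln (1 + \<i> * of_real t))"
    by (simp add: line_powr_def powr_def)
  also have "\<dots> = exp (- s * of_real (ln (1 + t\<^sup>2) / 2) + - (\<i> * s * of_real (arctan t)))"
    by (simp add: Ln_1_plus_i_of_real algebra_simps)
  finally show ?thesis
    by (simp only: exp_add)
qed

lemma cos_arctan_mult_powr_eq:
  "cos (s * of_real (arctan t)) * of_real (1 + t\<^sup>2) powr (- s / 2) = (line_powr s 1 t + line_powr s 1 (- t)) / 2"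
proof -
  define l where "l = (of_real (ln (1 + t\<^sup>2) / 2) :: complex)"
  define A where "A = (of_real (arctan t) :: complex)"
  have pos: "1 + t\<^sup>2 > 0"
    by (simp add: add_pos_nonneg)
  then have "(of_real (1 + t\<^sup>2) :: complex) \<noteq> 0"
    by (simp only: of_real_eq_0_iff)
  then have "of_real (1 + t\<^sup>2) powr (- s / 2) = exp (- s / 2 * Ln (of_real (1 + t\<^sup>2)))"
    by (subst powr_def) (simp only: if_False)
  also have "Ln (of_real (1 + t\<^sup>2)) = of_real (ln (1 + t\<^sup>2))"
    using pos by (rule Ln_of_real)
  finally have "of_real (1 + t\<^sup>2) powr (- s / 2) = exp (- s * l)"
    by (simp add: l_def)
  moreover have "line_powr s 1 t = exp (- s * l) * exp (- (\<i> * s * A))"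
    "line_powr s 1 (- t) = exp (- s * l) * exp (\<i> * s * A)"
    using line_powr_1_eq_exp[of s t] line_powr_1_eq_exp[of s "- t"]
    by (simp_all add: l_def A_def arctan_minus)
  ultimately show ?thesis
    unfolding cos_exp_eq by (simp add: A_def field_simps)
qed

definition tanh_sech :: "real \<Rightarrow> real" where
  "tanh_sech t = sinh (pi * t / 2) / (cosh (pi * t / 2))\<^sup>2"

definition Psi_integrand :: "complex \<Rightarrow> real \<Rightarrow> complex" where
  "Psi_integrand s t = line_powr s 1 t * of_real (tanh_sech t * t)"

lemma abs_tanh_sech_le: "\<bar>tanh_sech t\<bar> \<le> sech_pi_half t"
proof -
  define x where "x = pi * t / 2"
  have "\<bar>sinh x\<bar> \<le> cosh x"
    using power2_le_imp_le[of "\<bar>sinh x\<bar>" "\<bar>cosh x\<bar>"] by (simp add: cosh_square_eq)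
  then have "\<bar>sinh x\<bar> / (cosh x)\<^sup>2 \<le> cosh x / (cosh x)\<^sup>2"
    by (intro divide_right_mono) auto
  then show ?thesis
    by (simp add: tanh_sech_def sech_pi_half_def x_def abs_div power2_eq_square)
qed

lemma continuous_on_Psi_integrand: "continuous_on UNIV (Psi_integrand s)"
  unfolding Psi_integrand_def tanh_sech_def by (intro continuous_intros continuous_on_line_powr) auto

lemma norm_Psi_integrand_le:
  assumes "\<bar>Re s\<bar> \<le> R" "\<bar>Im s\<bar> \<le> R"
  shows "norm (Psi_integrand s t) \<le> exp (pi * R) * decay_const (R + 1) 1 * exp (- \<bar>t\<bar>)"
proof -
  have "\<bar>tanh_sech t\<bar> * \<bar>t\<bar> \<le> sech_pi_half t * (1 + \<bar>t\<bar>)"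
    using abs_tanh_sech_le[of t] sech_pi_half_pos[of t] by (intro mult_mono) auto
  then have "\<bar>tanh_sech t\<bar> * \<bar>t\<bar> \<le> (1 + \<bar>t\<bar>) powr 1 * sech_pi_half t"
    by (simp add: mult.commute)
  then have "norm (Psi_integrand s t) \<le> norm (line_powr s 1 t) * (1 + \<bar>t\<bar>) powr 1 * sech_pi_half t"
    by (simp add: Psi_integrand_def norm_mult abs_mult mult.assoc mult_left_mono)
  also have "\<dots> \<le> exp (pi * R) * decay_const (R + 1) 1 * exp (- \<bar>t\<bar>)"
    by (rule norm_line_powr_sech_le[OF _ assms]) auto
  finally show ?thesis .
qed

lemma integrable_Psi_integrand: "Psi_integrand s integrable_on UNIV"
  by (rule integrable_exp_decay[OF continuous_on_Psi_integrand
        norm_Psi_integrand_le[of s "\<bar>Re s\<bar> + \<bar>Im s\<bar>"]]) auto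

lemma integral_halfline_cos_arctan_eq:
  "integral {0..} (\<lambda>t::real. cos (s * of_real (arctan t)) * of_real (1 + t\<^sup>2) powr (- s / 2)
      * of_real (sinh (pi * t / 2) / (cosh (pi * t / 2))\<^sup>2) * of_real t)
    = integral UNIV (Psi_integrand s) / 2"
proof -
  define R where "R = \<bar>Re s\<bar> + \<bar>Im s\<bar>"
  define M where "M = exp (pi * R) * decay_const (R + 1) 1"
  let ?f = "\<lambda>t. Psi_integrand s t / 2"
  have "cos (s * of_real (arctan t)) * of_real (1 + t\<^sup>2) powr (- s / 2)
      * of_real (sinh (pi * t / 2) / (cosh (pi * t / 2))\<^sup>2) * of_real t = ?f t + ?f (- t)" for t
    unfolding cos_arctan_mult_powr_eq Psi_integrand_def tanh_sech_def
    by (simp add: field_simps)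
  moreover have "(\<lambda>t. ?f t + ?f (- t)) integrable_on {0..}"
  proof (rule integrable_continuous_dominated)
    show "continuous_on {0..} (\<lambda>t. ?f t + ?f (- t))"
      by (intro continuous_intros continuous_on_Psi_integrand[THEN continuous_on_compose2]) auto
    show "(\<lambda>t. M * exp (- \<bar>t\<bar>)) integrable_on {0..}"
      using integrable_cmul[OF integrable_exp_neg_abs_nonneg, of M] by simp
    show "norm (?f t + ?f (- t)) \<le> M * exp (- \<bar>t\<bar>)" for t
      using norm_triangle_ineq[of "?f t" "?f (- t)"] norm_Psi_integrand_le[of s R t]
        norm_Psi_integrand_le[of s R "- t"]
      by (simp add: R_def M_def norm_divide)
  qed auto
  moreover have "?f integrable_on UNIV"
    using integrable_Psi_integrand by (rule integrable_on_divide)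
  ultimately show ?thesis
    using integral_even_part_halfline[of ?f] by (simp add: integral_divide)
qed

definition parts_primitive :: "complex \<Rightarrow> complex \<Rightarrow> complex" where
  "parts_primitive s z = z * (1 + \<i> * z) powr (- s) / cosh (of_real pi * z / 2)"

lemma parts_primitive_of_real:
  "parts_primitive s (of_real t) = of_real t * line_powr s 1 t * of_real (sech_pi_half t)"
proof -
  have "cosh (of_real pi * of_real t / 2) = complex_of_real (cosh (pi * t / 2))"
    using cosh_complex_of_real[of "pi * t / 2"] by simp
  then show ?thesis
    unfolding parts_primitive_def line_powr_def sech_pi_half_def
    by (simp only: of_real_divide of_real_1 times_divide_eq_right mult_1_right)
qed

lemma parts_primitive_has_field_derivative:
  "(parts_primitive s has_field_derivative
      (1 - s) * Phi_integrand s 1 t + s * Phi_integrand (s + 1) 1 t - of_real (pi / 2) * Psi_integrand s t)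
    (at (of_real t))"
proof -
  define z where "z = (of_real t :: complex)"
  define w where "w = 1 + \<i> * z"
  define c where "c = cosh (pi * t / 2)"
  define sh where "sh = sinh (pi * t / 2)"
  have w: "w \<notin> \<real>\<^sub>\<le>\<^sub>0" "w \<noteq> 0"
    by (auto simp: w_def z_def complex_nonpos_Reals_iff complex_eq_iff)
  have "c > 0"
    by (simp add: c_def)
  have cosh_z: "cosh (of_real pi * z / 2) = of_real c" and sinh_z: "sinh (of_real pi * z / 2) = of_real sh"
    using cosh_complex_of_real[of "pi * t / 2"] sinh_complex_of_real[of "pi * t / 2"]
    by (simp_all add: z_def c_def sh_def)
  have "((\<lambda>z. z powr (- s)) has_field_derivative - s * w powr (- s - 1)) (at ((\<lambda>z. 1 + \<i> * z) z))"
    using has_field_derivative_powr[OF w(1), of "- s"] by (simp add: w_def)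
  moreover have "((\<lambda>z. 1 + \<i> * z) has_field_derivative \<i>) (at z)"
    by (auto intro!: derivative_eq_intros)
  ultimately have d_powr: "((\<lambda>z. (1 + \<i> * z) powr (- s)) has_field_derivative - s * w powr (- s - 1) * \<i>) (at z)"
    by (rule DERIV_chain2)
  have d_cosh: "((\<lambda>z. cosh (of_real pi * z / 2)) has_field_derivative sinh (of_real pi * z / 2) * (of_real pi / 2))
      (at z)"
    by (auto intro!: derivative_eq_intros)
  have "(parts_primitive s has_field_derivative
      ((1 * (1 + \<i> * z) powr (- s) + - s * w powr (- s - 1) * \<i> * z) * cosh (of_real pi * z / 2)
        - z * (1 + \<i> * z) powr (- s) * (sinh (of_real pi * z / 2) * (of_real pi / 2)))
      / (cosh (of_real pi * z / 2) * cosh (of_real pi * z / 2))) (at z)"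
    unfolding parts_primitive_def
    by (rule DERIV_divide[OF DERIV_mult[OF DERIV_ident d_powr] d_cosh]) (use \<open>c > 0\<close> in \<open>simp add: cosh_z\<close>)
  then have "(parts_primitive s has_field_derivative
      ((w powr (- s) + - s * w powr (- s - 1) * \<i> * z) * of_real c
        - z * w powr (- s) * (of_real sh * (of_real pi / 2))) / (of_real c * of_real c)) (at z)"
    by (simp only: cosh_z sinh_z w_def[symmetric] mult_1_left)
  moreover have "((w powr (- s) + - s * w powr (- s - 1) * \<i> * z) * of_real c
        - z * w powr (- s) * (of_real sh * (of_real pi / 2))) / (of_real c * of_real c)
      = (1 - s) * Phi_integrand s 1 t + s * Phi_integrand (s + 1) 1 t - of_real (pi / 2) * Psi_integrand s t"
  proof -
    define Q where "Q = w powr (- s)"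
    define Q' where "Q' = w powr (- s - 1)"
    have Q: "Q = w * Q'"
      using powr_add[of w "- s - 1" 1] w(2) by (simp add: Q_def Q'_def)
    have "(of_real c :: complex) \<noteq> 0"
      using \<open>c > 0\<close> by simp
    have "((Q + - s * Q' * \<i> * z) * of_real c - z * Q * (of_real sh * (of_real pi / 2)))
          / (of_real c * of_real c)
        = (((1 - s) * Q + s * Q') * of_real c - of_real (pi / 2) * (Q * of_real sh * z)) / (of_real c * of_real c)"
      unfolding Q w_def by (simp add: algebra_simps)
    also have "\<dots> = (1 - s) * (Q / of_real c) + s * (Q' / of_real c)
        - of_real (pi / 2) * (Q * of_real sh * z / (of_real c * of_real c))"
      using \<open>(of_real c :: complex) \<noteq> 0\<close>
      by (simp only: diff_divide_distrib nonzero_mult_divide_mult_cancel_right add_divide_distrib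
          times_divide_eq_right not_False_eq_True)
    also have "Q / of_real c = Phi_integrand s 1 t"
      unfolding Q_def Phi_integrand_def line_powr_def sech_pi_half_def c_def w_def z_def
      by (simp only: of_real_divide of_real_1 times_divide_eq_right mult_1_right)
    also have "Q' / of_real c = Phi_integrand (s + 1) 1 t"
    proof -
      have "- (s + 1) = - s - 1"
        by simp
      then show ?thesis
        unfolding Q'_def Phi_integrand_def line_powr_def sech_pi_half_def c_def w_def z_def
        by (simp only: of_real_divide of_real_1 times_divide_eq_right mult_1_right)
    qed
    also have "Q * of_real sh * z / (of_real c * of_real c) = Psi_integrand s t"
      unfolding Q_def Psi_integrand_def line_powr_def tanh_sech_def c_def sh_def w_def z_def
      by (simp add: power2_eq_square mult_ac)
    finally show ?thesis
      by (simp only: Q_def Q'_def)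
  qed
  ultimately show ?thesis
    by (simp add: z_def)
qed

lemma integral_Psi_integrand:
  "integral UNIV (Psi_integrand s) = 2 / of_real pi * ((1 - s) * Phi s 1 + s * Phi (s + 1) 1)"
proof -
  define R where "R = \<bar>Re s\<bar> + \<bar>Im s\<bar>"
  define M where "M = exp (pi * R) * decay_const (R + 1) 1"
  have int_Phi: "Phi_integrand s 1 integrable_on UNIV" "Phi_integrand (s + 1) 1 integrable_on UNIV"
    by (auto intro: integrable_Phi_integrand)
  have bound: "norm (parts_primitive s (of_real t)) \<le> M * exp (- \<bar>t\<bar>)" for t
  proof -
    have "norm (parts_primitive s (of_real t)) \<le> norm (line_powr s 1 t) * (1 + \<bar>t\<bar>) powr 1 * sech_pi_half t"
      using sech_pi_half_pos[of t]
      by (simp add: parts_primitive_of_real norm_mult mult_left_mono mult_right_mono mult_ac)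
    also have "\<dots> \<le> M * exp (- \<bar>t\<bar>)"
      unfolding M_def by (rule norm_line_powr_sech_le) (auto simp: R_def)
    finally show ?thesis .
  qed
  have vanish: "((\<lambda>t. parts_primitive s (of_real t)) \<longlongrightarrow> 0) F"
    if "((\<lambda>t. M * exp (- \<bar>t\<bar>)) \<longlongrightarrow> 0) F" for F
    by (rule Lim_null_comparison[OF always_eventually that]) (use bound in auto)
  have "((\<lambda>t. M * exp (- \<bar>t\<bar>)) \<longlongrightarrow> 0) at_top" "((\<lambda>t. M * exp (- \<bar>t\<bar>)) \<longlongrightarrow> 0) at_bot"
    by real_asymp+
  then have "integral UNIV (\<lambda>t. (1 - s) * Phi_integrand s 1 t + s * Phi_integrand (s + 1) 1 t
      - of_real (pi / 2) * Psi_integrand s t) = 0"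
    using int_Phi integrable_Psi_integrand
    by (intro integral_derivative_eq_0[where F = "\<lambda>t. parts_primitive s (of_real t)"]
        has_vector_derivative_real_field parts_primitive_has_field_derivative
        integrable_diff integrable_add integrable_on_mult_right vanish) auto
  then have "(1 - s) * Phi s 1 + s * Phi (s + 1) 1 - of_real (pi / 2) * integral UNIV (Psi_integrand s) = 0"
    using int_Phi integrable_Psi_integrand
    by (simp add: Phi_def integral_diff integral_add integrable_diff integrable_add integrable_on_mult_right)
  then show ?thesis
    by (simp add: field_simps)
qed

theorem mainTheorem5:
  fixes s :: complex
  assumes "s \<noteq> 0"
  shows "dirichlet_eta (s + 1) =
           2 * (s - 1) / s * dirichlet_eta s
         + 2 powr (s - 1) * of_real pi / s *
           integral {0..} (\<lambda>t::real.
              cos (s * of_real (arctan t)) * (of_real (1 + t^2)) powr (- s / 2)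
              * of_real (sinh (pi * t / 2) / (cosh (pi * t / 2))^2) * of_real t)"
proof -
  have "(2 :: complex) powr (s - 1) = 2 * 2 powr (s - 2)"
    using powr_add[of "2 :: complex" "s - 2" 1] by (simp add: algebra_simps)
  moreover have "(2 :: complex) powr (s + 1 - 2) = 2 powr (s - 1)"
    by (simp add: algebra_simps)
  ultimately show ?thesis
    unfolding integral_halfline_cos_arctan_eq integral_Psi_integrand dirichlet_eta_eq_Phi
    using assms by (simp add: field_simps)
qed

end
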